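(* Let $n \ge 2$ and let $Q(x) = x_1x_2 + x_3x_4 + \cdots + x_{2n-1}x_{2n}$ be the hyperbolic quadratic form on $V(2n,2)$. Let $\Pi$ and $\Sigma$ be two totally singular $n$-dimensional subspaces with $\Pi \cap \Sigma = 0$. If $Y$ is a singular point with $Y \not\subseteq \Pi$ and $Y \not\subseteq \Sigma$, then there is a unique $2$-dimensional subspace (line) $J$ containing $Y$ such that $J \cap \Pi \neq 0$ and $J \cap \Sigma \neq 0$; moreover this line $J$ is totally singular.
   Context: Points are $1$-dimensional subspaces, lines are $2$-dimensional subspaces. A point $\langle y\rangle$ is singular if $Q(y)=0$; a subspace is totally singular if all its points are singular. *)

theory Defs
  imports Complex_Main "HOL-Library.Z2" "HOL-Library.Function_Algebras"
begin

text \<open>GF(2) is the library type bit. Vectors of V(2n,2) are functions nat => bit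
  vanishing outside the coordinate set {0..<2n}; coordinate x_k of the paper is x (k-1).\<close>

definition scl :: "bit \<Rightarrow> (nat \<Rightarrow> bit) \<Rightarrow> (nat \<Rightarrow> bit)" where
  "scl c x = (\<lambda>i. c * x i)"

lemma vector_space_scl: "vector_space scl"
  by unfold_locales (simp_all only: scl_def fun_eq_iff distrib_left distrib_right mult.assoc mult_1_left plus_fun_def simp_thms)

definition Vsp :: "nat \<Rightarrow> (nat \<Rightarrow> bit) set" where
  "Vsp n = {x. \<forall>i. 2 * n \<le> i \<longrightarrow> x i = 0}"

definition Qf :: "nat \<Rightarrow> (nat \<Rightarrow> bit) \<Rightarrow> bit" where
  "Qf n x = (\<Sum>i<n. x (2 * i) * x (2 * i + 1))"

definition subsp :: "nat \<Rightarrow> (nat \<Rightarrow> bit) set \<Rightarrow> bool" where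
  "subsp n S \<longleftrightarrow> S \<subseteq> Vsp n \<and> Modules.module.subspace scl S"

definition sdim :: "(nat \<Rightarrow> bit) set \<Rightarrow> nat" where
  "sdim S = Vector_Spaces.vector_space.dim scl S"

definition tot_sing :: "nat \<Rightarrow> (nat \<Rightarrow> bit) set \<Rightarrow> bool" where
  "tot_sing n S \<longleftrightarrow> (\<forall>x\<in>S. Qf n x = 0)"

end

theory Submission
  imports Defs
begin

(* Since \<Pi> \<inter> \<Sigma> = 0 and dim \<Pi> + dim \<Sigma> = 2n, the space is the direct sum of \<Pi> and \<Sigma>,
   so the singular vector y spanning Y splits uniquely as y = p + s with p \<in> \<Pi>, s \<in> \<Sigma>; both
   are nonzero because Y lies in neither. Over GF(2) the line J = <p, s> is {0, p, s, y}: it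
   contains Y, meets \<Pi> and \<Sigma>, and its three points p, s, y are singular. Any line J' through Y
   meeting \<Pi> in a and \<Sigma> in b is {0, a, b, a + b}, so y = a + b, and uniqueness of the
   decomposition gives a = p, b = s. *)

lemma (in module) sum_decomposition_unique:
  assumes "subspace S" "subspace T" "S \<inter> T = {0}"
    and "s \<in> S" "s' \<in> S" "t \<in> T" "t' \<in> T" "s + t = s' + t'"
  shows "s = s' \<and> t = t'"
proof -
  have "s - s' = t' - t" using assms(8) by (simp add: algebra_simps)
  moreover have "s - s' \<in> S" "t' - t \<in> T" using assms by (simp_all add: subspace_diff)
  ultimately have "t' - t \<in> S \<inter> T" by simp
  then have "t' = t" using assms(3) by simp
  then show ?thesis using assms(8) by simp
qed

context vector_space begin

lemma independent_Un:
  assumes "independent A" "independent C" "span A \<inter> span C = {0}"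
  shows "independent (A \<union> C)"
proof -
  have not_in_span: "a \<notin> span ((A \<union> C) - {a})"
    if A: "independent A" and AC: "span A \<inter> span C = {0}" and a: "a \<in> A" for A C a
  proof
    assume "a \<in> span ((A \<union> C) - {a})"
    then have "a \<in> span ((A - {a}) \<union> C)"
      using span_mono[of "(A \<union> C) - {a}" "(A - {a}) \<union> C"] by blast
    then obtain x w where aw: "a = x + w" and x: "x \<in> span (A - {a})" and w: "w \<in> span C"
      unfolding span_Un by blast
    have "w = a - x" using aw by simp
    also have "\<dots> \<in> span A"
      using x span_mono[of "A - {a}" A] by (blast intro: span_diff span_base a)
    finally have "w = 0" using w AC by blast
    then have "a \<in> span (A - {a})" using aw x by simp
    then show False using A a dependent_def by blast
  qed
  show ?thesis
    unfolding dependent_def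
    using not_in_span[OF assms(1,3)] not_in_span[OF assms(2)] assms(3)
    by (metis Int_commute Un_commute Un_iff)
qed

lemma subspace_eq_span_independent:
  assumes J: "subspace J" and B: "independent B" "B \<subseteq> J" "card B = dim J" and "dim J \<noteq> 0"
  shows "J = span B"
proof
  obtain C where C: "C \<subseteq> J" "independent C" "J \<subseteq> span C" "card C = dim J"
    by (rule basis_exists)
  have "finite B" "finite C" using B C \<open>dim J \<noteq> 0\<close> by (auto intro: card_ge_0_finite)
  show "J \<subseteq> span B"
  proof
    fix z assume "z \<in> J"
    show "z \<in> span B"
    proof (rule ccontr)
      assume z: "z \<notin> span B"
      have "independent (insert z B)" using independent_insertI[OF z B(1)] .
      moreover have "insert z B \<subseteq> span C" using \<open>z \<in> J\<close> B(2) C(3) by auto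
      ultimately have "card (insert z B) \<le> card C"
        using independent_span_bound[OF \<open>finite C\<close>] by blast
      moreover have "z \<notin> B" using z span_base by blast
      ultimately show False using \<open>finite B\<close> B(3) C(4) by simp
    qed
  qed
  show "span B \<subseteq> J" using span_minimal[OF B(2) J] .
qed

end

interpretation V: vector_space scl by (rule vector_space_scl)

lemma scl_bit_cases: "scl c x = 0 \<or> scl c x = x"
  by (cases c) (simp_all add: scl_def fun_eq_iff)

lemma subspace_line: "V.subspace {0, u, v, u + (v :: nat \<Rightarrow> bit)}"
  unfolding V.subspace_def using scl_bit_cases by (auto simp: add_ac)

lemma span_pair: "V.span {u, v} = {0, u, v, u + (v :: nat \<Rightarrow> bit)}"
proof
  show "V.span {u, v} \<subseteq> {0, u, v, u + v}"
    by (rule V.span_minimal[OF _ subspace_line]) auto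
  show "{0, u, v, u + v} \<subseteq> V.span {u, v}"
    by (auto intro: V.span_base V.span_add V.span_zero)
qed

lemma span_singleton_bit: "V.span {v} = {0, v :: nat \<Rightarrow> bit}"
  using span_pair[of v v] by auto

lemma independent_pair_bit:
  assumes "u \<noteq> 0" "v \<noteq> 0" "u \<noteq> (v :: nat \<Rightarrow> bit)"
  shows "V.independent {u, v}"
proof (rule V.independent_insertI)
  show "u \<notin> V.span {v}" using assms by (simp add: span_singleton_bit)
  show "V.independent {v}" using assms by simp
qed

lemma subsp_line:
  assumes "u \<in> Vsp n" "v \<in> Vsp n" "u \<noteq> 0" "v \<noteq> 0" "u \<noteq> v"
  shows "subsp n {0, u, v, u + v}" "sdim {0, u, v, u + v} = 2"
proof -
  show "subsp n {0, u, v, u + v}"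
    using assms subspace_line by (auto simp: subsp_def Vsp_def)
  show "sdim {0, u, v, u + v} = 2"
    using V.dim_span_eq_card_independent[OF independent_pair_bit[OF assms(3-5)]] assms(5)
    by (simp add: sdim_def span_pair)
qed

lemma subspace_dim_2_eq_line:
  assumes J: "V.subspace J" "V.dim J = 2"
    and uv: "u \<in> J" "v \<in> J" "u \<noteq> 0" "v \<noteq> 0" "u \<noteq> v"
  shows "J = {0, u, v, u + v}"
proof -
  have "J = V.span {u, v}"
    using uv J by (intro V.subspace_eq_span_independent independent_pair_bit) auto
  then show ?thesis by (simp add: span_pair)
qed

lemma subspace_dim_1_eq_point:
  assumes Y: "V.subspace Y" "V.dim Y = 1"
  obtains y where "y \<noteq> 0" "Y = {0, y}"
proof -
  obtain B where B: "B \<subseteq> Y" "V.independent B" "Y \<subseteq> V.span B" "card B = V.dim Y"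
    by (rule V.basis_exists)
  then obtain y where y: "B = {y}" using Y(2) by (auto simp: card_1_singleton_iff)
  have "Y = {0, y}" using B y V.subspace_0[OF Y(1)] by (auto simp: span_singleton_bit)
  moreover have "y \<noteq> 0" using B(2) y by simp
  ultimately show thesis by (rule that[rotated])
qed

lemma sum_apply_fun:
  "finite A \<Longrightarrow> sum (f :: 'a \<Rightarrow> 'b \<Rightarrow> 'c::comm_monoid_add) A x = (\<Sum>a\<in>A. f a x)"
  by (induction A rule: finite_induct) simp_all

definition unit_vec :: "nat \<Rightarrow> nat \<Rightarrow> bit" where
  "unit_vec i = (\<lambda>j. if j = i then 1 else 0)"

lemma Vsp_subset_span_units: "Vsp n \<subseteq> V.span (unit_vec ` {..<2 * n})"
proof
  fix x assume x: "x \<in> Vsp n"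
  have "x = (\<Sum>i<2 * n. scl (x i) (unit_vec i))"
  proof
    fix j
    have "(\<Sum>i<2 * n. scl (x i) (unit_vec i)) j = (\<Sum>i<2 * n. if j = i then x i else 0)"
      unfolding sum_apply_fun[OF finite_lessThan] scl_def unit_vec_def by (intro sum.cong) auto
    also have "\<dots> = x j"
      using x by (subst sum.delta'[OF finite_lessThan]) (auto simp: Vsp_def)
    finally show "x j = (\<Sum>i<2 * n. scl (x i) (unit_vec i)) j" by simp
  qed
  also have "\<dots> \<in> V.span (unit_vec ` {..<2 * n})"
    by (intro V.span_sum V.span_scale V.span_base) auto
  finally show "x \<in> V.span (unit_vec ` {..<2 * n})" .
qed

lemma independent_Vsp_card_le:
  assumes "V.independent B" "B \<subseteq> Vsp n"
  shows "finite B" "card B \<le> 2 * n"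
proof -
  have "finite B \<and> card B \<le> card (unit_vec ` {..<2 * n})"
    using assms Vsp_subset_span_units by (intro V.independent_span_bound) auto
  then show "finite B" "card B \<le> 2 * n"
    using card_image_le[of "{..<2 * n}"] by (auto intro: le_trans)
qed

lemma Vsp_subset_sums:
  assumes S: "subsp n S" "sdim S = n" and T: "subsp n T" "sdim T = n" and ST: "S \<inter> T = {0}"
  shows "Vsp n \<subseteq> {s + t | s t. s \<in> S \<and> t \<in> T}"
proof -
  obtain BS where BS: "BS \<subseteq> S" "V.independent BS" "S \<subseteq> V.span BS" "card BS = n"
    using S by (metis V.basis_exists sdim_def)
  obtain BT where BT: "BT \<subseteq> T" "V.independent BT" "T \<subseteq> V.span BT" "card BT = n"
    using T by (metis V.basis_exists sdim_def)
  have span_BS: "V.span BS = S" and span_BT: "V.span BT = T"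
    using V.span_subspace[OF BS(1,3)] V.span_subspace[OF BT(1,3)] S T by (simp_all add: subsp_def)
  have fin: "finite BS" "finite BT"
    using BS(1) BT(1) S(1) T(1) unfolding subsp_def
    by (blast intro: independent_Vsp_card_le(1)[OF BS(2)] independent_Vsp_card_le(1)[OF BT(2)])+
  have "BS \<inter> BT \<subseteq> {0}" using BS(1) BT(1) ST by blast
  moreover have "0 \<notin> BS" using BS(2) V.dependent_zero by blast
  ultimately have "BS \<inter> BT = {}" by blast
  then have card_B: "card (BS \<union> BT) = 2 * n"
    using fin BS(4) BT(4) by (simp add: card_Un_disjoint)
  have indep_B: "V.independent (BS \<union> BT)"
    using BS BT ST span_BS span_BT by (intro V.independent_Un) auto
  have "Vsp n \<subseteq> V.span (BS \<union> BT)"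
  proof
    fix y assume y: "y \<in> Vsp n"
    show "y \<in> V.span (BS \<union> BT)"
    proof (rule ccontr)
      assume y_out: "y \<notin> V.span (BS \<union> BT)"
      then have "V.independent (insert y (BS \<union> BT))" "y \<notin> BS \<union> BT"
        using V.independent_insertI[OF _ indep_B] V.span_base by blast+
      moreover have "insert y (BS \<union> BT) \<subseteq> Vsp n" using y BS BT S T by (auto simp: subsp_def)
      ultimately show False
        using independent_Vsp_card_le[of "insert y (BS \<union> BT)" n] fin card_B by simp
    qed
  qed
  then show ?thesis by (simp add: V.span_Un span_BS span_BT)
qed

lemma transversal_line_unique:
  assumes P: "V.subspace P" and S: "V.subspace S" and PS: "P \<inter> S = {0}"
    and p: "p \<in> P" and s: "s \<in> S" and y: "p + s \<notin> P" "p + s \<notin> S"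
    and J: "V.subspace J" "V.dim J = 2" "p + s \<in> J" "J \<inter> P \<noteq> {0}" "J \<inter> S \<noteq> {0}"
  shows "J = {0, p, s, p + s}"
proof -
  have "0 \<in> J" "0 \<in> P" "0 \<in> S" using P S J(1) by (simp_all add: V.subspace_0)
  then obtain a b where a: "a \<in> J" "a \<in> P" "a \<noteq> 0" and b: "b \<in> J" "b \<in> S" "b \<noteq> 0"
    using J(4,5) by blast
  have "a \<noteq> b" using a b PS by auto
  then have J_eq: "J = {0, a, b, a + b}" using subspace_dim_2_eq_line J(1,2) a b by blast
  have "p + s \<noteq> 0" "p + s \<noteq> a" "p + s \<noteq> b" using y a b \<open>0 \<in> P\<close> by auto
  then have "p + s = a + b" using J(3) J_eq by blast
  then have "a = p \<and> b = s" using V.sum_decomposition_unique[OF P S PS] a b p s by metis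
  then show ?thesis using J_eq by simp
qed

theorem mainTheorem3:
  fixes n :: nat and Pi Sigma Y :: "(nat \<Rightarrow> bit) set"
  assumes "n \<ge> 2"
    and "subsp n Pi" and "sdim Pi = n" and "tot_sing n Pi"
    and "subsp n Sigma" and "sdim Sigma = n" and "tot_sing n Sigma"
    and "Pi \<inter> Sigma = {0}"
    and "subsp n Y" and "sdim Y = 1" and "tot_sing n Y"
    and "\<not> Y \<subseteq> Pi" and "\<not> Y \<subseteq> Sigma"
  shows "\<exists>J. (subsp n J \<and> sdim J = 2 \<and> Y \<subseteq> J \<and> J \<inter> Pi \<noteq> {0} \<and> J \<inter> Sigma \<noteq> {0})
           \<and> (\<forall>J'. subsp n J' \<and> sdim J' = 2 \<and> Y \<subseteq> J' \<and> J' \<inter> Pi \<noteq> {0} \<and> J' \<inter> Sigma \<noteq> {0}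
                   \<longrightarrow> J' = J)
           \<and> tot_sing n J"
proof -
  obtain y where y: "y \<noteq> 0" "Y = {0, y}"
    using subspace_dim_1_eq_point assms(9,10) by (auto simp: subsp_def sdim_def)
  have "y \<in> Vsp n" using assms(9) y by (auto simp: subsp_def)
  then obtain p s where ps: "y = p + s" "p \<in> Pi" "s \<in> Sigma"
    using Vsp_subset_sums[OF assms(2,3,5,6,8)] by blast
  have y_out: "y \<notin> Pi" "y \<notin> Sigma"
    using assms(2,5,12,13) y by (auto simp: subsp_def V.subspace_0)
  then have ps_ne: "p \<noteq> 0" "s \<noteq> 0" "p \<noteq> s" using ps y by auto
  then have J: "subsp n {0, p, s, y}" "sdim {0, p, s, y} = 2"
    using subsp_line[of p n s] ps assms(2,5) by (auto simp: subsp_def)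
  show ?thesis
  proof (intro exI[of _ "{0, p, s, y}"] conjI allI impI)
    fix J' assume "subsp n J' \<and> sdim J' = 2 \<and> Y \<subseteq> J' \<and> J' \<inter> Pi \<noteq> {0} \<and> J' \<inter> Sigma \<noteq> {0}"
    then show "J' = {0, p, s, y}"
      using transversal_line_unique[of Pi Sigma p s J'] assms(2,5,8) ps y y_out
      by (auto simp: subsp_def sdim_def)
  qed (use J ps ps_ne y assms(4,7,11) in \<open>auto simp: tot_sing_def\<close>)
qed

end
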